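(* For every positive integer $D$ there is a deterministic algorithm (which may use $D$) such that, in every run whose sequence of communication graphs satisfies Assumption 1 with parameter $D$, the algorithm solves consensus, and every process has decided by round $r_{ST}+4D+1$, where $r_{ST}$ is the first round for which an interval $J=[r_{ST},r_{ST}+d]$ as in Assumption 1 exists.
   Context: Model: a finite set $\Pi$ of $n\ge2$ processes runs a deterministic algorithm in synchronous lock-step rounds $r=1,2,\dots$. An adversary fixes an infinite sequence of simple directed graphs $\mathcal{G}^1,\mathcal{G}^2,\dots$ on vertex set $\Pi$; $(p\to q)\in\mathcal{G}^r$ iff $q$ receives $p$'s round-$r$ message in round $r$. In round $r$ each process $p$ broadcasts a message determined by its current state (received exactly by its out-neighbours in $\mathcal{G}^r$), then computes its new state from its current state and the set of (sender, message) pairs it received in round $r$. Consensus: each process $p$ starts with an input value $v_p$ from an ordered set $V$ and may irrevocably decide a value; Agreement: any two decided values are equal; Validity: every decided value is the input value of some process; Termination: every process eventually decides. Causality: $p$ causally influences $q$ in round $t$ if $q=p$ or $(p\to q)\in\mathcal{G}^t$; a causal chain of length $k\ge1$ from $p$ in round $t$ to $q$ is a sequence $p=p_0,\dots,p_k=q$ with $p_i$ causally influencing $p_{i+1}$ in round $t+i$; the causal distance $d_t(p,q)$ is the least such $k$ ($\infty$ if none). A root component of $\mathcal{G}^t$ is a strongly connected component $\mathcal{R}$ with no edge $(q\to p)$, $p\in\mathcal{R}$, $q\notin\mathcal{R}$. For an interval $I=[r,s]$, an $I$-vertex-stable root component is a set $\mathcal{R}\subseteq\Pi$ that, in every round $t\in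 I$, is (the vertex set of) a root component of $\mathcal{G}^t$. When each $\mathcal{G}^x$ has a unique root component $\mathcal{R}^x$, the round-$x$ network causal diameter is $D^x=\max\{d_x(p,q):p\in\mathcal{R}^x,q\in\Pi\}$, and for $I=[r,s]$, $D^I=\max\{D^x: x\in I,\ x+D^x-1\le s\}$ ($\infty$ if this set is empty). An $I$-vertex-stable root component with $I=[r,s]$ is $D$-bounded if $D\ge D^I$ and $D^{s-D+1}\le D$. Assumption 1 (parameter $D$): for every round $r$ there is exactly one root component $\mathcal{R}^r$ in $\mathcal{G}^r$; every $I$-vertex-stable root component with $|I|\ge D$ (where $|[r,s]|=s-r+1$) is $D$-bounded; and there exists an interval $J=[r_{ST},r_{ST}+d]$ with $d>4D$ such that there is a $D$-bounded $J$-vertex-stable root component. *)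

theory Defs
  imports Main "HOL-Library.FSet" "HOL-Library.Extended_Nat"
begin

text \<open>A run's communication graphs: G r is the set of edges (p,q) of round r (r >= 1);
  the value G 0 is irrelevant.\<close>

definition simple_graphs :: "(nat \<Rightarrow> ('p \<times> 'p) set) \<Rightarrow> bool" where
  "simple_graphs G \<longleftrightarrow> (\<forall>r\<ge>1. \<forall>p. (p, p) \<notin> G r)"

text \<open>State space used for algorithms: full-information views (rich enough to simulate
  any deterministic algorithm). Messages are of the same type.\<close>

datatype ('p, 'v) view = Init 'p 'v | Step "('p, 'v) view" "('p \<times> ('p, 'v) view) fset"

text \<open>run ini msg tr inp G r p: state of p after round r (r = 0: initial state).\<close>

primrec run :: "('p \<Rightarrow> 'v \<Rightarrow> 's) \<Rightarrow> ('p \<Rightarrow> 's \<Rightarrow> 'm) \<Rightarrow> ('p \<Rightarrow> 's \<Rightarrow> ('p \<times> 'm) set \<Rightarrow> 's)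
   \<Rightarrow> ('p \<Rightarrow> 'v) \<Rightarrow> (nat \<Rightarrow> ('p \<times> 'p) set) \<Rightarrow> nat \<Rightarrow> 'p \<Rightarrow> 's" where
  "run ini msg tr inp G 0 p = ini p (inp p)"
| "run ini msg tr inp G (Suc r) p =
     tr p (run ini msg tr inp G r p)
        {(q, msg q (run ini msg tr inp G r q)) | q. (q, p) \<in> G (Suc r)}"

definition causally_influences :: "(nat \<Rightarrow> ('p \<times> 'p) set) \<Rightarrow> nat \<Rightarrow> 'p \<Rightarrow> 'p \<Rightarrow> bool" where
  "causally_influences G t p q \<longleftrightarrow> q = p \<or> (p, q) \<in> G t"

definition causal_chain :: "(nat \<Rightarrow> ('p \<times> 'p) set) \<Rightarrow> nat \<Rightarrow> nat \<Rightarrow> 'p \<Rightarrow> 'p \<Rightarrow> bool" where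
  "causal_chain G t k p q \<longleftrightarrow> k \<ge> 1 \<and>
     (\<exists>f :: nat \<Rightarrow> 'p. f 0 = p \<and> f k = q \<and>
        (\<forall>i<k. causally_influences G (t + i) (f i) (f (Suc i))))"

definition causal_dist :: "(nat \<Rightarrow> ('p \<times> 'p) set) \<Rightarrow> nat \<Rightarrow> 'p \<Rightarrow> 'p \<Rightarrow> enat" where
  "causal_dist G t p q =
     (if \<exists>k. causal_chain G t k p q then enat (LEAST k. causal_chain G t k p q) else \<infinity>)"

definition is_scc :: "('p \<times> 'p) set \<Rightarrow> 'p set \<Rightarrow> bool" where
  "is_scc E R \<longleftrightarrow> R \<noteq> {} \<and> (\<forall>p\<in>R. \<forall>q\<in>R. (p, q) \<in> E\<^sup>*) \<and>
     (\<forall>p\<in>R. \<forall>q. (p, q) \<in> E\<^sup>* \<and> (q, p) \<in> E\<^sup>* \<longrightarrow> q \<in> R)"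

definition is_root_component :: "('p \<times> 'p) set \<Rightarrow> 'p set \<Rightarrow> bool" where
  "is_root_component E R \<longleftrightarrow> is_scc E R \<and> (\<forall>p\<in>R. \<forall>q. (q, p) \<in> E \<longrightarrow> q \<in> R)"

definition vertex_stable_root :: "(nat \<Rightarrow> ('p \<times> 'p) set) \<Rightarrow> nat \<Rightarrow> nat \<Rightarrow> 'p set \<Rightarrow> bool" where
  "vertex_stable_root G r s R \<longleftrightarrow> (\<forall>t\<in>{r..s}. is_root_component (G t) R)"

definition root_of :: "(nat \<Rightarrow> ('p \<times> 'p) set) \<Rightarrow> nat \<Rightarrow> 'p set" where
  "root_of G x = (THE R. is_root_component (G x) R)"

definition net_diam :: "(nat \<Rightarrow> ('p \<times> 'p) set) \<Rightarrow> nat \<Rightarrow> enat" where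
  "net_diam G x = Max {causal_dist G x p q | p q. p \<in> root_of G x}"

definition net_diam_int :: "(nat \<Rightarrow> ('p \<times> 'p) set) \<Rightarrow> nat \<Rightarrow> nat \<Rightarrow> enat" where
  "net_diam_int G r s =
     (let S = {net_diam G x | x. x \<in> {r..s} \<and> enat x + net_diam G x - 1 \<le> enat s}
      in if S = {} then \<infinity> else Max S)"

definition D_bounded :: "(nat \<Rightarrow> ('p \<times> 'p) set) \<Rightarrow> nat \<Rightarrow> nat \<Rightarrow> nat \<Rightarrow> 'p set \<Rightarrow> bool" where
  "D_bounded G D r s R \<longleftrightarrow> vertex_stable_root G r s R \<and>
     net_diam_int G r s \<le> enat D \<and> net_diam G (s + 1 - D) \<le> enat D"

text \<open>Assumption 1 with parameter D. Rounds are numbered from 1.\<close>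
definition assumption1 :: "(nat \<Rightarrow> ('p \<times> 'p) set) \<Rightarrow> nat \<Rightarrow> bool" where
  "assumption1 G D \<longleftrightarrow>
     (\<forall>r\<ge>1. \<exists>!R. is_root_component (G r) R) \<and>
     (\<forall>r s R. 1 \<le> r \<longrightarrow> r \<le> s \<longrightarrow> s + 1 - r \<ge> D \<longrightarrow> vertex_stable_root G r s R
         \<longrightarrow> D_bounded G D r s R) \<and>
     (\<exists>rST d R. rST \<ge> 1 \<and> d > 4 * D \<and> D_bounded G D rST (rST + d) R)"

definition r_ST :: "(nat \<Rightarrow> ('p \<times> 'p) set) \<Rightarrow> nat \<Rightarrow> nat" where
  "r_ST G D = (LEAST r. r \<ge> 1 \<and> (\<exists>d R. d > 4 * D \<and> D_bounded G D r (r + d) R))"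

text \<open>dec s = Some v means a process in state s has decided v.\<close>
definition solves_consensus ::
  "(nat \<Rightarrow> 'p \<Rightarrow> 's) \<Rightarrow> ('s \<Rightarrow> 'v option) \<Rightarrow> ('p \<Rightarrow> 'v) \<Rightarrow> bool" where
  "solves_consensus st dec inp \<longleftrightarrow>
     (\<forall>r r' p v. r \<le> r' \<longrightarrow> dec (st r p) = Some v \<longrightarrow> dec (st r' p) = Some v) \<and>
     (\<forall>r r' p q v w. dec (st r p) = Some v \<longrightarrow> dec (st r' q) = Some w \<longrightarrow> v = w) \<and>
     (\<forall>r p v. dec (st r p) = Some v \<longrightarrow> (\<exists>q. v = inp q)) \<and>
     (\<forall>p. \<exists>r. dec (st r p) \<noteq> None)"

end

theory Submission
  imports Defs
begin

text \<open>
  Processes run the full-information protocol. A process decides once its view certifies a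
  stable window: a set that was the root component in D+1 consecutive rounds y, ..., y+D.
  The decided value is computed from the view; once the view contains the states of the
  relevant root members it coincides with a value determined by the run alone, the root
  value of round y: follow the root component back while it does not change, otherwise jump
  to the latest earlier round whose whole root component is known to some current root
  member, and otherwise take the least input in the current root.

  Let y0 be a stable window and y > y0 a round where the root just changed. By D-boundedness,
  once the root of y0 has been stable for D+1 rounds, the states of its members at y0 reach
  everybody within D more rounds, before the root changes. So y0 is covered at y, and by
  induction the root value of every round from y0 on is that of y0. Hence all stable windows
  have the same root value, which is an input (agreement, validity), and the window of
  Assumption 1 starting at r_ST is certified by every process by round r_ST + 2D.
\<close>

section \<open>Full-information views\<close>

primrec view_owner :: "('p, 'v) view \<Rightarrow> 'p" where
  "view_owner (Init p v) = p"
| "view_owner (Step s M) = view_owner s"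

primrec view_round :: "('p, 'v) view \<Rightarrow> nat" where
  "view_round (Init p v) = 0"
| "view_round (Step s M) = Suc (view_round s)"

primrec view_input :: "('p, 'v) view \<Rightarrow> 'v" where
  "view_input (Init p v) = v"
| "view_input (Step s M) = view_input s"

primrec view_senders :: "('p, 'v) view \<Rightarrow> 'p set" where
  "view_senders (Init p v) = {}"
| "view_senders (Step s M) = fst ` fset M"

inductive subview :: "('p, 'v) view \<Rightarrow> ('p, 'v) view \<Rightarrow> bool" where
  subview_refl: "subview V V"
| subview_prev: "subview V s \<Longrightarrow> subview V (Step s M)"
| subview_msg: "(q, w) \<in> fset M \<Longrightarrow> subview V w \<Longrightarrow> subview V (Step s M)"

inductive_cases subview_InitE: "subview W (Init p v)"
inductive_cases subview_StepE: "subview W (Step s M)"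

lemma subview_trans [trans]: "subview A B \<Longrightarrow> subview B C \<Longrightarrow> subview A C"
  by (rotate_tac, induction B C rule: subview.induct) (auto intro: subview.intros)

text \<open>Abs_fset is only meaningful on finite sets, which is why the lemmas below need a finite
  type of processes.\<close>

definition fi_state :: "(nat \<Rightarrow> ('p \<times> 'p) set) \<Rightarrow> ('p \<Rightarrow> 'v) \<Rightarrow> nat \<Rightarrow> 'p \<Rightarrow> ('p, 'v) view" where
  "fi_state G inp = run Init (\<lambda>p s. s) (\<lambda>p s M. Step s (Abs_fset M)) inp G"

lemma fset_Abs_fset_received:
  "fset (Abs_fset {(q, f q) | q. (q, p) \<in> (E :: ('p::finite \<times> 'p) set)}) = {(q, f q) | q. (q, p) \<in> E}"
proof -
  have "{(q, f q) | q. (q, p) \<in> E} = (\<lambda>q. (q, f q)) ` {q. (q, p) \<in> E}" by auto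
  then show ?thesis by (simp add: Abs_fset_inverse)
qed

lemma fi_state_0 [simp]: "fi_state G inp 0 p = Init p (inp p)"
  by (simp add: fi_state_def)

lemma fi_state_Suc:
  "fi_state G inp (Suc r) p =
     Step (fi_state G inp r p) (Abs_fset {(q, fi_state G inp r q) | q. (q, p) \<in> G (Suc r)})"
  by (simp add: fi_state_def)

lemma view_owner_fi_state [simp]: "view_owner (fi_state G inp t p) = p"
  by (induction t) (simp_all add: fi_state_Suc)

lemma view_round_fi_state [simp]: "view_round (fi_state G inp t p) = t"
  by (induction t) (simp_all add: fi_state_Suc)

lemma view_input_fi_state [simp]: "view_input (fi_state G inp t p) = inp p"
  by (induction t) (simp_all add: fi_state_Suc)

lemma view_senders_fi_state [simp]:
  "view_senders (fi_state G inp (Suc t) (p::'p::finite)) = {q. (q, p) \<in> G (Suc t)}"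
  by (auto simp: fi_state_Suc fset_Abs_fset_received image_iff)

lemma subview_fi_state_eq:
  "subview W (fi_state G inp t (q::'p::finite)) \<Longrightarrow>
     W = fi_state G inp (view_round W) (view_owner W)"
proof (induction t arbitrary: q)
  case 0
  then show ?case by (auto elim: subview_InitE)
next
  case (Suc t)
  from Suc.prems[unfolded fi_state_Suc] show ?case
    by (cases rule: subview_StepE) (auto simp: fi_state_Suc fset_Abs_fset_received intro: Suc.IH)
qed

lemma subview_fi_state_prefix: "y \<le> t \<Longrightarrow> subview (fi_state G inp y m) (fi_state G inp t m)"
proof (induction t)
  case (Suc t)
  then show ?case
    by (cases "y = Suc t") (auto simp: fi_state_Suc intro: subview.intros)
qed (simp add: subview_refl)

lemma causally_influences_subview:
  "causally_influences G (Suc t) p q \<Longrightarrow>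
     subview (fi_state G inp t p) (fi_state G inp (Suc t) (q::'p::finite))"
  unfolding causally_influences_def
  by (auto simp: fi_state_Suc fset_Abs_fset_received intro: subview.intros)

text \<open>The state after round x is what is sent in round x+1.\<close>

lemma causal_chain_subview:
  assumes "causal_chain G (Suc x) k p q"
  shows "subview (fi_state G inp x p) (fi_state G inp (x + k) (q::'p::finite))"
proof -
  obtain f where f: "f 0 = p" "f k = q"
    and step: "\<And>i. i < k \<Longrightarrow> causally_influences G (Suc (x + i)) (f i) (f (Suc i))"
    using assms unfolding causal_chain_def by auto
  have "subview (fi_state G inp x p) (fi_state G inp (x + j) (f j))" if "j \<le> k" for j
    using that
  proof (induction j)
    case (Suc j)
    then have "subview (fi_state G inp x p) (fi_state G inp (x + j) (f j))" by simp
    also have "subview \<dots> (fi_state G inp (x + Suc j) (f (Suc j)))"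
      using causally_influences_subview step[of j] Suc.prems by simp
    finally show ?case .
  qed (simp add: f subview_refl)
  from this[of k] show ?thesis using f by simp
qed

lemma rtrancl_into_closed_set:
  assumes closed: "\<forall>p\<in>R. \<forall>q. (q, p) \<in> E \<longrightarrow> q \<in> R"
    and "(a, b) \<in> E\<^sup>*" "b \<in> R"
  shows "a \<in> R \<and> (a, b) \<in> {(p, m). (p, m) \<in> E \<and> m \<in> R}\<^sup>*"
  using assms(2,3)
proof (induction rule: converse_rtrancl_induct)
  case (step y z)
  then show ?case using closed by (blast intro: converse_rtrancl_into_rtrancl)
qed simp

lemma is_root_component_restrict:
  "is_root_component E R \<longleftrightarrow> is_root_component {(p, m). (p, m) \<in> E \<and> m \<in> R} R"
  (is "_ \<longleftrightarrow> is_root_component ?E R")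
proof -
  have sub: "?E\<^sup>* \<subseteq> E\<^sup>*" by (rule rtrancl_mono) auto
  have closed_iff: "(\<forall>p\<in>R. \<forall>q. (q, p) \<in> E \<longrightarrow> q \<in> R) \<longleftrightarrow> (\<forall>p\<in>R. \<forall>q. (q, p) \<in> ?E \<longrightarrow> q \<in> R)"
    by blast
  show ?thesis
    unfolding is_root_component_def is_scc_def closed_iff
    using rtrancl_into_closed_set[of R E] sub closed_iff by blast
qed

locale unique_roots =
  fixes G :: "nat \<Rightarrow> ('p::finite \<times> 'p) set"
  assumes unique_root: "1 \<le> r \<Longrightarrow> \<exists>!R. is_root_component (G r) R"
begin

lemma root_of_is_root: "1 \<le> r \<Longrightarrow> is_root_component (G r) (root_of G r)"
  unfolding root_of_def using unique_root by (rule theI')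

lemma root_of_eqI: "1 \<le> r \<Longrightarrow> is_root_component (G r) R \<Longrightarrow> root_of G r = R"
  unfolding root_of_def using unique_root by (rule the1_equality)

lemma root_of_nonempty: "1 \<le> r \<Longrightarrow> root_of G r \<noteq> {}"
  using root_of_is_root unfolding is_root_component_def is_scc_def by blast

end

section \<open>What a view knows about the run\<close>

definition knows_state :: "('p, 'v) view \<Rightarrow> 'p \<Rightarrow> nat \<Rightarrow> bool" where
  "knows_state V m y \<longleftrightarrow> (\<exists>W. subview W V \<and> view_owner W = m \<and> view_round W = y)"

definition known_state :: "('p, 'v) view \<Rightarrow> 'p \<Rightarrow> nat \<Rightarrow> ('p, 'v) view" where
  "known_state V m y = (SOME W. subview W V \<and> view_owner W = m \<and> view_round W = y)"

definition known_edges :: "('p, 'v) view \<Rightarrow> nat \<Rightarrow> ('p \<times> 'p) set" where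
  "known_edges V y =
     {(p, m). \<exists>W. subview W V \<and> view_owner W = m \<and> view_round W = y \<and> p \<in> view_senders W}"

text \<open>Since a root component is closed under incoming edges, the view can certify it by
  knowing only the states of its members.\<close>

definition knows_root :: "('p, 'v) view \<Rightarrow> 'p set \<Rightarrow> nat \<Rightarrow> bool" where
  "knows_root V R y \<longleftrightarrow> (\<forall>m\<in>R. knows_state V m y) \<and>
     is_root_component {(p, m). (p, m) \<in> known_edges V y \<and> m \<in> R} R"

lemma subview_fi_state_iff:
  "subview W (fi_state G inp t (q::'p::finite)) \<and> view_owner W = m \<and> view_round W = y \<longleftrightarrow>
     W = fi_state G inp y m \<and> subview (fi_state G inp y m) (fi_state G inp t q)"
  using subview_fi_state_eq by fastforce

lemma knows_state_fi_state:
  "knows_state (fi_state G inp t (q::'p::finite)) m y \<longleftrightarrow>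
     subview (fi_state G inp y m) (fi_state G inp t q)"
  unfolding knows_state_def subview_fi_state_iff by blast

lemma known_state_fi_state:
  "subview (fi_state G inp y m) (fi_state G inp t (q::'p::finite)) \<Longrightarrow>
     known_state (fi_state G inp t q) m y = fi_state G inp y m"
  unfolding known_state_def subview_fi_state_iff by (rule some_equality) auto

lemma known_edges_fi_state:
  assumes "1 \<le> y"
  shows "(p, m) \<in> known_edges (fi_state G inp t (q::'p::finite)) y \<longleftrightarrow>
     (p, m) \<in> G y \<and> subview (fi_state G inp y m) (fi_state G inp t q)"
proof -
  obtain y' where y: "y = Suc y'" using assms by (cases y) auto
  show ?thesis
    unfolding known_edges_def y using subview_fi_state_eq[of _ G inp t q]
    by (auto, metis view_senders_fi_state mem_Collect_eq, force)
qed

lemma knows_root_fi_state: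
  assumes "1 \<le> y"
  shows "knows_root (fi_state G inp t (q::'p::finite)) R y \<longleftrightarrow>
     (\<forall>m\<in>R. subview (fi_state G inp y m) (fi_state G inp t q)) \<and> is_root_component (G y) R"
proof -
  have "{(p, m). (p, m) \<in> known_edges (fi_state G inp t q) y \<and> m \<in> R} = {(p, m). (p, m) \<in> G y \<and> m \<in> R}"
    if "\<forall>m\<in>R. subview (fi_state G inp y m) (fi_state G inp t q)"
    using that known_edges_fi_state[OF assms] by blast
  then show ?thesis
    unfolding knows_root_def knows_state_fi_state
    using is_root_component_restrict[of "G y" R] by auto
qed

context unique_roots
begin

lemma knows_root_iff:
  "1 \<le> y \<Longrightarrow> knows_root (fi_state G inp t q) R y \<longleftrightarrow>
     (\<forall>m\<in>R. subview (fi_state G inp y m) (fi_state G inp t q)) \<and> R = root_of G y"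
  using knows_root_fi_state root_of_is_root root_of_eqI by metis

end

section \<open>Root values\<close>

definition covered_rounds :: "(nat \<Rightarrow> ('p \<times> 'p) set) \<Rightarrow> ('p \<Rightarrow> 'v) \<Rightarrow> nat \<Rightarrow> nat set" where
  "covered_rounds G inp y = {y'. 1 \<le> y' \<and> y' < y \<and>
     (\<exists>m\<in>root_of G y. \<forall>m'\<in>root_of G y'. subview (fi_state G inp y' m') (fi_state G inp y m))}"

lemma finite_covered_rounds: "finite (covered_rounds G inp y)"
  by (rule finite_subset[of _ "{..<y}"]) (auto simp: covered_rounds_def)

lemma Max_covered_rounds:
  "covered_rounds G inp y \<noteq> {} \<Longrightarrow> Max (covered_rounds G inp y) \<in> covered_rounds G inp y"
  using finite_covered_rounds by (rule Max_in)

function root_value :: "(nat \<Rightarrow> ('p \<times> 'p) set) \<Rightarrow> ('p \<Rightarrow> 'v::linorder) \<Rightarrow> nat \<Rightarrow> 'v" where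
  "root_value G inp y =
     (if 2 \<le> y \<and> root_of G (y - 1) = root_of G y then root_value G inp (y - 1)
      else if covered_rounds G inp y \<noteq> {} then root_value G inp (Max (covered_rounds G inp y))
      else Min (inp ` root_of G y))"
  by pat_completeness auto
termination
  by (relation "measure (\<lambda>(G, inp, y). y)")
    (auto dest!: Max_covered_rounds simp: covered_rounds_def)

declare root_value.simps [simp del]

lemma root_value_same_root:
  "2 \<le> y \<and> root_of G (y - 1) = root_of G y \<Longrightarrow> root_value G inp y = root_value G inp (y - 1)"
  by (subst root_value.simps) (simp only: if_P)

lemma root_value_covered:
  assumes "\<not> (2 \<le> y \<and> root_of G (y - 1) = root_of G y)" "covered_rounds G inp y \<noteq> {}"
  shows "root_value G inp y = root_value G inp (Max (covered_rounds G inp y))"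
  by (subst root_value.simps) (simp only: if_not_P[OF assms(1)] if_P[OF assms(2)])

definition known_root :: "('p, 'v) view \<Rightarrow> nat \<Rightarrow> 'p set" where
  "known_root V y = (SOME R. knows_root V R y)"

definition view_covered_rounds :: "('p, 'v) view \<Rightarrow> nat \<Rightarrow> nat set" where
  "view_covered_rounds V y = {y'. 1 \<le> y' \<and> y' < y \<and>
     (\<exists>m\<in>known_root V y. \<exists>R. knows_root (known_state V m y) R y')}"

lemma Max_view_covered_rounds:
  assumes "view_covered_rounds V y \<noteq> {}"
  shows "Max (view_covered_rounds V y) \<in> view_covered_rounds V y"
proof -
  have "finite (view_covered_rounds V y)"
    by (rule finite_subset[of _ "{..<y}"]) (auto simp: view_covered_rounds_def)
  then show ?thesis using assms by (rule Max_in)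
qed

text \<open>The process-side computation of root_value, using only the view V.\<close>

function view_value :: "('p, 'v::linorder) view \<Rightarrow> nat \<Rightarrow> 'v" where
  "view_value V y =
     (if 2 \<le> y \<and> knows_root V (known_root V y) (y - 1) then view_value V (y - 1)
      else if view_covered_rounds V y \<noteq> {} then view_value V (Max (view_covered_rounds V y))
      else Min (view_input ` (\<lambda>m. known_state V m y) ` known_root V y))"
  by pat_completeness auto
termination
  by (relation "measure (\<lambda>(V, y). y)")
    (auto dest!: Max_view_covered_rounds simp: view_covered_rounds_def)

declare view_value.simps [simp del]

context unique_roots
begin

lemma root_value_in_inputs: "1 \<le> y \<Longrightarrow> root_value G inp y \<in> range inp"
proof (induction y rule: less_induct)
  case (less y)
  have "Min (inp ` root_of G y) \<in> inp ` root_of G y"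
    using root_of_nonempty[OF less.prems] by (intro Min_in) auto
  then show ?case
    using less Max_covered_rounds[of G inp y]
    by (subst root_value.simps) (auto simp: covered_rounds_def)
qed

context
  fixes inp :: "'p \<Rightarrow> 'v::linorder" and t :: nat and q :: 'p and y :: nat
  assumes round_pos: "1 \<le> y"
    and knows_root_members: "\<forall>m\<in>root_of G y. subview (fi_state G inp y m) (fi_state G inp t q)"
begin

lemma known_root_fi_state: "known_root (fi_state G inp t q) y = root_of G y"
  unfolding known_root_def using knows_root_iff[OF round_pos] knows_root_members
  by (metis (mono_tags) someI)

lemma view_covered_rounds_fi_state:
  "view_covered_rounds (fi_state G inp t q) y = covered_rounds G inp y"
proof -
  have "(\<exists>R. knows_root (known_state (fi_state G inp t q) m y) R y') \<longleftrightarrow>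
      (\<forall>m'\<in>root_of G y'. subview (fi_state G inp y' m') (fi_state G inp y m))"
    if "m \<in> root_of G y" "1 \<le> y'" for m y'
    using that knows_root_members by (simp add: known_state_fi_state knows_root_iff)
  then show ?thesis
    unfolding view_covered_rounds_def covered_rounds_def known_root_fi_state
    by (intro Collect_cong) blast
qed

lemma knows_root_prev_iff:
  assumes "2 \<le> y"
  shows "knows_root (fi_state G inp t q) (root_of G y) (y - 1) \<longleftrightarrow> root_of G (y - 1) = root_of G y"
proof -
  have "1 \<le> y - 1" using assms by simp
  have "\<forall>m\<in>root_of G y. subview (fi_state G inp (y - 1) m) (fi_state G inp t q)"
    using knows_root_members by (blast intro: subview_trans[OF subview_fi_state_prefix[OF diff_le_self]])
  then show ?thesis
    unfolding knows_root_iff[OF \<open>1 \<le> y - 1\<close>] by auto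
qed

lemma known_inputs_fi_state:
  "view_input ` (\<lambda>m. known_state (fi_state G inp t q) m y) ` known_root (fi_state G inp t q) y =
     inp ` root_of G y"
  unfolding known_root_fi_state image_image using knows_root_members
  by (auto simp: known_state_fi_state intro!: image_cong)

end

lemma view_value_fi_state:
  "1 \<le> y \<Longrightarrow> \<forall>m\<in>root_of G y. subview (fi_state G inp y m) (fi_state G inp t q) \<Longrightarrow>
     view_value (fi_state G inp t q) y = root_value G inp y"
proof (induction y rule: less_induct)
  case (less y)
  let ?V = "fi_state G inp t q" and ?C = "covered_rounds G inp y"
  note known = less.prems
  have "2 \<le> y \<and> knows_root ?V (known_root ?V y) (y - 1) \<longleftrightarrow>
      2 \<le> y \<and> root_of G (y - 1) = root_of G y"
    using knows_root_prev_iff[OF known] known_root_fi_state[OF known] by auto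
  then have "view_value ?V y = (if 2 \<le> y \<and> root_of G (y - 1) = root_of G y then view_value ?V (y - 1)
      else if ?C \<noteq> {} then view_value ?V (Max ?C) else Min (inp ` root_of G y))"
    by (subst view_value.simps)
      (simp only: view_covered_rounds_fi_state[OF known] known_inputs_fi_state[OF known])
  moreover have "view_value ?V (y - 1) = root_value G inp (y - 1)"
    if "2 \<le> y" "root_of G (y - 1) = root_of G y"
  proof (rule less.IH)
    show "y - 1 < y" "1 \<le> y - 1" using that(1) by auto
    show "\<forall>m\<in>root_of G (y - 1). subview (fi_state G inp (y - 1) m) ?V"
      using that(2) known(2) by (auto intro: subview_trans[OF subview_fi_state_prefix[OF diff_le_self]])
  qed
  moreover have "view_value ?V (Max ?C) = root_value G inp (Max ?C)" if nonempty: "?C \<noteq> {}"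
  proof -
    obtain m where "1 \<le> Max ?C" "Max ?C < y" "m \<in> root_of G y"
      and covers: "\<forall>m'\<in>root_of G (Max ?C). subview (fi_state G inp (Max ?C) m') (fi_state G inp y m)"
      using Max_covered_rounds[OF nonempty] unfolding covered_rounds_def by blast
    moreover have "subview (fi_state G inp y m) ?V"
      using known(2) \<open>m \<in> root_of G y\<close> by blast
    ultimately show ?thesis
      using less.IH covers subview_trans by meson
  qed
  ultimately show ?case
    by (simp add: root_value.simps[of G inp y])
qed

end

section \<open>Stable root components spread their states\<close>

lemma causal_dist_le_net_diam:
  fixes G :: "nat \<Rightarrow> ('p::finite \<times> 'p) set"
  assumes "p \<in> root_of G x"
  shows "causal_dist G x p q \<le> net_diam G x"
proof -
  have "finite {causal_dist G x p q | p q. p \<in> root_of G x}"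
    by (rule finite_subset[of _ "(\<lambda>(p, q). causal_dist G x p q) ` UNIV"]) auto
  then show ?thesis unfolding net_diam_def using assms by (auto intro: Max_ge)
qed

lemma causal_chain_if_causal_dist_le:
  assumes "causal_dist G x p q \<le> enat D"
  obtains k where "k \<le> D" "causal_chain G x k p q"
proof -
  have ex: "\<exists>k. causal_chain G x k p q"
    using assms unfolding causal_dist_def by (auto split: if_splits)
  then have "causal_chain G x (LEAST k. causal_chain G x k p q) p q" by (rule LeastI_ex)
  moreover have "(LEAST k. causal_chain G x k p q) \<le> D"
    using assms ex unfolding causal_dist_def by simp
  ultimately show ?thesis using that by blast
qed

locale bounded_roots = unique_roots G for G :: "nat \<Rightarrow> ('p::finite \<times> 'p) set" +
  fixes D :: nat
  assumes D_pos: "1 \<le> D"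
    and long_stable_roots_bounded: "\<lbrakk>1 \<le> r; r \<le> s; D \<le> s + 1 - r; vertex_stable_root G r s R\<rbrakk>
      \<Longrightarrow> D_bounded G D r s R"
begin

text \<open>D-boundedness bounds the causal diameter of round b+1-D by D, and the stable root is
  the root of that round.\<close>

lemma stable_root_reaches_all:
  assumes stable: "vertex_stable_root G a b R" and "1 \<le> a" "a \<le> y" "y + D \<le> b" "m \<in> R"
  shows "subview (fi_state G inp y m) (fi_state G inp b q)"
proof -
  define x where "x = b - D"
  have x: "a \<le> Suc x" "y \<le> x" "x + D = b" "b + 1 - D = Suc x"
    using assms D_pos unfolding x_def by auto
  have "D_bounded G D a b R"
    by (rule long_stable_roots_bounded) (use assms in auto)
  then have "net_diam G (Suc x) \<le> enat D" unfolding D_bounded_def x(4) by blast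
  moreover have "root_of G (Suc x) = R"
    using stable x D_pos by (intro root_of_eqI) (auto simp: vertex_stable_root_def)
  ultimately have "causal_dist G (Suc x) m q \<le> enat D"
    using causal_dist_le_net_diam[of m G "Suc x" q] \<open>m \<in> R\<close> by auto
  then obtain k where k: "k \<le> D" "causal_chain G (Suc x) k m q"
    by (rule causal_chain_if_causal_dist_le)
  have "subview (fi_state G inp y m) (fi_state G inp x m)"
    using x(2) by (rule subview_fi_state_prefix)
  also have "subview \<dots> (fi_state G inp (x + k) q)"
    using k(2) by (rule causal_chain_subview)
  also have "subview \<dots> (fi_state G inp b q)"
    using k(1) x(3) by (intro subview_fi_state_prefix) simp
  finally show ?thesis .
qed

end

definition stable_window :: "(nat \<Rightarrow> ('p \<times> 'p) set) \<Rightarrow> nat \<Rightarrow> nat \<Rightarrow> bool" where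
  "stable_window G D y \<longleftrightarrow> 1 \<le> y \<and> (\<forall>i\<le>D. root_of G (y + i) = root_of G y)"

lemma stable_window_pos: "stable_window G D y \<Longrightarrow> 1 \<le> y"
  unfolding stable_window_def by blast

lemma stable_window_root: "stable_window G D y \<Longrightarrow> i \<le> D \<Longrightarrow> root_of G (y + i) = root_of G y"
  unfolding stable_window_def by blast

context bounded_roots
begin

lemma stable_until_root_change:
  assumes window: "stable_window G D y0" and "y0 < y"
    and change: "\<not> (2 \<le> y \<and> root_of G (y - 1) = root_of G y)"
  obtains b where "y0 + D \<le> b" "b < y" "vertex_stable_root G y0 b (root_of G y0)"
proof -
  let ?R0 = "root_of G y0"
  let ?P = "\<lambda>z. y0 < z \<and> root_of G z \<noteq> ?R0"
  define z where "z = (LEAST z. ?P z)"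
  have "1 \<le> y0" using window by (rule stable_window_pos)
  have "\<exists>z\<le>y. ?P z"
  proof (cases "root_of G y = ?R0")
    case True
    have "2 \<le> y" using \<open>y0 < y\<close> \<open>1 \<le> y0\<close> by simp
    then have "root_of G (y - 1) \<noteq> ?R0" using change True by simp
    moreover from this have "y0 < y - 1" using \<open>y0 < y\<close> by (cases "y - 1 = y0") auto
    ultimately show ?thesis by (intro exI[of _ "y - 1"]) simp
  qed (use \<open>y0 < y\<close> in blast)
  then obtain z' where "z' \<le> y" "?P z'" by blast
  then have z: "?P z" "z \<le> y"
    unfolding z_def using LeastI[of ?P z'] Least_le[of ?P z'] by auto
  have before: "root_of G w = ?R0" if "y0 \<le> w" "w < z" for w
    using not_less_Least[of w ?P] that unfolding z_def[symmetric] by (cases "w = y0") auto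
  have "y0 + D < z"
  proof (rule ccontr)
    assume "\<not> y0 + D < z"
    then have "root_of G (y0 + (z - y0)) = ?R0"
      using window by (intro stable_window_root) auto
    then show False using z(1) by simp
  qed
  moreover have "vertex_stable_root G y0 (z - 1) ?R0"
    unfolding vertex_stable_root_def
  proof
    fix t assume "t \<in> {y0..z - 1}"
    then have "y0 \<le> t" "t < z" using z(1) by auto
    then have "root_of G t = ?R0" by (rule before)
    moreover have "1 \<le> t" using \<open>1 \<le> y0\<close> \<open>y0 \<le> t\<close> by simp
    ultimately show "is_root_component (G t) ?R0"
      using root_of_is_root[of t] by simp
  qed
  ultimately show ?thesis
    using that[of "z - 1"] z(2) by simp
qed

lemma stable_window_covered:
  assumes window: "stable_window G D y0" and "y0 < y"
    and change: "\<not> (2 \<le> y \<and> root_of G (y - 1) = root_of G y)"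
  shows "y0 \<in> covered_rounds G inp y"
proof -
  obtain b where b: "y0 + D \<le> b" "b < y" "vertex_stable_root G y0 b (root_of G y0)"
    using stable_until_root_change assms .
  have "1 \<le> y0" using window by (rule stable_window_pos)
  obtain m where m: "m \<in> root_of G y"
    using root_of_nonempty \<open>1 \<le> y0\<close> \<open>y0 < y\<close> by fastforce
  have "subview (fi_state G inp y0 m') (fi_state G inp y m)" if "m' \<in> root_of G y0" for m'
  proof -
    have "subview (fi_state G inp y0 m') (fi_state G inp b m)"
      using stable_root_reaches_all b(1,3) \<open>1 \<le> y0\<close> that by blast
    also have "subview \<dots> (fi_state G inp y m)"
      using b(2) by (intro subview_fi_state_prefix) simp
    finally show ?thesis .
  qed
  then show ?thesis unfolding covered_rounds_def using m \<open>1 \<le> y0\<close> \<open>y0 < y\<close> by blast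
qed

lemma root_value_after_stable_window:
  assumes window: "stable_window G D y0"
  shows "y0 \<le> y \<Longrightarrow> root_value G inp y = root_value G inp y0"
proof (induction y rule: less_induct)
  case (less y)
  consider "y = y0" | "y0 < y" "2 \<le> y" "root_of G (y - 1) = root_of G y"
    | "y0 < y" "\<not> (2 \<le> y \<and> root_of G (y - 1) = root_of G y)"
    using less.prems by fastforce
  then show ?case
  proof cases
    case 2
    then have "root_value G inp y = root_value G inp (y - 1)"
      by (intro root_value_same_root) simp
    also have "\<dots> = root_value G inp y0"
      using less.IH[of "y - 1"] 2 by simp
    finally show ?thesis .
  next
    case 3
    let ?C = "covered_rounds G inp y"
    have "y0 \<in> ?C" using stable_window_covered window 3 .
    then have "?C \<noteq> {}" "y0 \<le> Max ?C" using finite_covered_rounds[of G inp y] by auto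
    moreover have "Max ?C < y"
      using Max_covered_rounds[OF \<open>?C \<noteq> {}\<close>] unfolding covered_rounds_def by blast
    ultimately have "root_value G inp (Max ?C) = root_value G inp y0"
      using less.IH[of "Max ?C"] by blast
    moreover have "root_value G inp y = root_value G inp (Max ?C)"
      using 3(2) \<open>?C \<noteq> {}\<close> by (rule root_value_covered)
    ultimately show ?thesis by simp
  qed simp
qed

lemma stable_windows_same_root_value:
  "stable_window G D y1 \<Longrightarrow> stable_window G D y2 \<Longrightarrow> root_value G inp y1 = root_value G inp y2"
  by (metis nat_le_linear root_value_after_stable_window)

end

section \<open>The decision rule\<close>

definition knows_window :: "nat \<Rightarrow> ('p, 'v) view \<Rightarrow> nat \<Rightarrow> bool" where
  "knows_window D V y \<longleftrightarrow> 1 \<le> y \<and> (\<exists>R. \<forall>i\<le>D. knows_root V R (y + i))"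

definition decide :: "nat \<Rightarrow> ('p, 'v::linorder) view \<Rightarrow> 'v option" where
  "decide D V =
     (if \<exists>y. knows_window D V y then Some (view_value V (SOME y. knows_window D V y)) else None)"

context unique_roots
begin

lemma knows_window_fi_state:
  "knows_window D (fi_state G inp t q) y \<longleftrightarrow> stable_window G D y \<and>
     (\<forall>i\<le>D. \<forall>m\<in>root_of G y. subview (fi_state G inp (y + i) m) (fi_state G inp t q))"
proof (cases "1 \<le> y")
  case True
  then have "knows_root (fi_state G inp t q) R (y + i) \<longleftrightarrow>
      (\<forall>m\<in>R. subview (fi_state G inp (y + i) m) (fi_state G inp t q)) \<and> R = root_of G (y + i)" for R i
    by (simp add: knows_root_iff)
  then show ?thesis
    unfolding knows_window_def stable_window_def by (metis add_0_right le0)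
qed (simp add: knows_window_def stable_window_def)

lemma knows_window_mono:
  "knows_window D (fi_state G inp t q) y \<Longrightarrow> t \<le> t' \<Longrightarrow> knows_window D (fi_state G inp t' q) y"
  unfolding knows_window_fi_state by (meson subview_fi_state_prefix subview_trans)

lemma decide_fi_state_mono:
  assumes "decide D (fi_state G inp t q) \<noteq> None" "t \<le> t'"
  shows "decide D (fi_state G inp t' q) \<noteq> None"
proof -
  obtain y where "knows_window D (fi_state G inp t q) y"
    using assms(1) unfolding decide_def by (auto split: if_splits)
  then have "knows_window D (fi_state G inp t' q) y"
    using assms(2) by (rule knows_window_mono)
  then show ?thesis unfolding decide_def by auto
qed

lemma decide_fi_state_SomeE:
  assumes "decide D (fi_state G inp t q) = Some v"
  obtains y where "stable_window G D y" "v = root_value G inp y"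
proof -
  let ?V = "fi_state G inp t q"
  have ex: "\<exists>y. knows_window D ?V y"
    using assms unfolding decide_def by (auto split: if_splits)
  define y where "y = (SOME y. knows_window D ?V y)"
  have "knows_window D ?V y" unfolding y_def using ex by (rule someI_ex)
  then have "stable_window G D y" "\<forall>m\<in>root_of G y. subview (fi_state G inp y m) ?V"
    unfolding knows_window_fi_state by (auto dest: spec[of _ 0])
  moreover have "v = view_value ?V y"
    using assms ex unfolding decide_def y_def by auto
  ultimately show ?thesis
    using that view_value_fi_state stable_window_pos by metis
qed

end

context bounded_roots
begin

lemma decide_fi_state_eq_root_value:
  "decide D (fi_state G inp t q) = Some v \<Longrightarrow> stable_window G D y \<Longrightarrow> v = root_value G inp y"
  by (metis decide_fi_state_SomeE stable_windows_same_root_value)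

lemma decides_after_stable_root:
  assumes stable: "vertex_stable_root G r (r + 2 * D) R" and "1 \<le> r"
  shows "stable_window G D r" and "decide D (fi_state G inp (r + 2 * D) q) \<noteq> None"
proof -
  have root: "root_of G (r + i) = R" if "i \<le> 2 * D" for i
    using stable that \<open>1 \<le> r\<close> by (intro root_of_eqI) (auto simp: vertex_stable_root_def)
  show window: "stable_window G D r"
    unfolding stable_window_def using root root[of 0] \<open>1 \<le> r\<close> by simp
  have "\<forall>i\<le>D. \<forall>m\<in>root_of G r. subview (fi_state G inp (r + i) m) (fi_state G inp (r + 2 * D) q)"
    using root[of 0] \<open>1 \<le> r\<close> by (auto intro!: stable_root_reaches_all[OF stable])
  then have "knows_window D (fi_state G inp (r + 2 * D) q) r"
    using window knows_window_fi_state by blast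
  then show "decide D (fi_state G inp (r + 2 * D) q) \<noteq> None"
    unfolding decide_def by auto
qed

lemma fi_state_solves_consensus:
  assumes stable: "vertex_stable_root G r (r + 2 * D) R" and "1 \<le> r"
  shows "solves_consensus (fi_state G inp) (decide D) inp"
    and "r + 2 * D \<le> t \<Longrightarrow> decide D (fi_state G inp t p) \<noteq> None"
proof -
  have decision: "decide D (fi_state G inp t q) = Some v \<Longrightarrow> v = root_value G inp r" for t q v
    using decide_fi_state_eq_root_value decides_after_stable_root(1)[OF assms] by blast
  show decided: "r + 2 * D \<le> t \<Longrightarrow> decide D (fi_state G inp t p) \<noteq> None" for t p
    using decides_after_stable_root(2)[OF assms] decide_fi_state_mono by blast
  obtain q0 where input: "root_value G inp r = inp q0"
    using root_value_in_inputs[OF \<open>1 \<le> r\<close>] by blast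
  show "solves_consensus (fi_state G inp) (decide D) inp"
    unfolding solves_consensus_def
  proof (intro conjI allI impI)
    fix t t' p v
    assume "t \<le> t'" and decided_t: "decide D (fi_state G inp t p) = Some v"
    then obtain v' where "decide D (fi_state G inp t' p) = Some v'"
      using decide_fi_state_mono by fastforce
    then show "decide D (fi_state G inp t' p) = Some v"
      using decision decided_t by metis
  next
    show "v = w" if "decide D (fi_state G inp t p) = Some v" "decide D (fi_state G inp t' q) = Some w"
      for t t' p q v w
      using decision[OF that(1)] decision[OF that(2)] by simp
  next
    show "\<exists>q. v = inp q" if "decide D (fi_state G inp t p) = Some v" for t p v
      using decision[OF that] input by blast
  next
    show "\<exists>t. decide D (fi_state G inp t p) \<noteq> None" for p
      using decided by blast
  qed
qed

end

theorem theorem1: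
  fixes D :: nat
  assumes "card (UNIV :: 'p set) \<ge> 2" and "D \<ge> 1"
  shows "\<exists>(ini :: 'p::finite \<Rightarrow> 'v::linorder \<Rightarrow> ('p, 'v) view)
            (msg :: 'p \<Rightarrow> ('p, 'v) view \<Rightarrow> ('p, 'v) view)
            (tr :: 'p \<Rightarrow> ('p, 'v) view \<Rightarrow> ('p \<times> ('p, 'v) view) set \<Rightarrow> ('p, 'v) view)
            (dec :: ('p, 'v) view \<Rightarrow> 'v option).
          \<forall>(inp :: 'p \<Rightarrow> 'v) (G :: nat \<Rightarrow> ('p \<times> 'p) set).
            simple_graphs G \<and> assumption1 G D \<longrightarrow>
              solves_consensus (run ini msg tr inp G) dec inp \<and>
              (\<forall>p. dec (run ini msg tr inp G (r_ST G D + 4 * D + 1) p) \<noteq> None)"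
proof -
  have "solves_consensus (fi_state G inp) (decide D) inp \<and>
      (\<forall>p. decide D (fi_state G inp (r_ST G D + 4 * D + 1) p) \<noteq> None)"
    if "assumption1 G D" for inp :: "'p \<Rightarrow> 'v" and G :: "nat \<Rightarrow> ('p \<times> 'p) set"
  proof -
    interpret bounded_roots G D
      using that \<open>D \<ge> 1\<close> by unfold_locales (auto simp: assumption1_def)
    have "1 \<le> r_ST G D \<and> (\<exists>d R. 4 * D < d \<and> D_bounded G D (r_ST G D) (r_ST G D + d) R)"
      unfolding r_ST_def by (rule LeastI_ex) (use that in \<open>auto simp: assumption1_def\<close>)
    then obtain d R where "1 \<le> r_ST G D" "4 * D < d" "D_bounded G D (r_ST G D) (r_ST G D + d) R"
      by blast
    then have "vertex_stable_root G (r_ST G D) (r_ST G D + 2 * D) R"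
      by (auto simp: D_bounded_def vertex_stable_root_def)
    moreover have "r_ST G D + 2 * D \<le> r_ST G D + 4 * D + 1" by simp
    ultimately show ?thesis
      using fi_state_solves_consensus \<open>1 \<le> r_ST G D\<close> by blast
  qed
  then show ?thesis
    unfolding fi_state_def by blast
qed

end
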